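(* Let $d\geq1$, let $\hat\rho$ be a $d\times d$ density operator with eigenvalues $\hat r_1,\dots,\hat r_d$ and eigenvalue decomposition $\hat\rho=\sum_i\hat r_i|b_i\rangle\!\langle b_i|$, and fix $p_\rho>0$. Then the problem maximize $\sum_{i=1}^d\hat r_is_i+p_\rho\sqrt{1-\sum_{i=1}^ds_i^2}$ over $(s_1,\dots,s_d)\in\mathbb R^d$ subject to $\sum_{i=1}^ds_i=1$ and $\sum_{i=1}^ds_i^2\leq1$ has a unique solution. Its optimal value is $$\frac1d\left(1+\sqrt{d-1}\sqrt{d\big(p_\rho^2+\mathrm{Tr}(\hat\rho^2)\big)-1}\right),$$ and the optimal array is $s_i^\sharp=\frac1d+c\,(\hat r_i-\frac1d)$ with $c=\sqrt{\frac{d-1}{d(p_\rho^2+\mathrm{Tr}(\hat\rho^2))-1}}$, i.e. it corresponds to the matrix $$\sigma^\sharp=\sum_i s_i^\sharp|b_i\rangle\!\langle b_i|=\frac1d\mathbb 1+\sqrt{\frac{d-1}{d(p_\rho^2+\mathrm{Tr}(\hat\rho^2))-1}}\Big(\hat\rho-\frac1d\mathbb 1\Big).$$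
   Context: $\mathbb 1$ denotes the $d\times d$ identity matrix. *)

theory Defs
  imports "Jordan_Normal_Form.Matrix"
begin

definition cinner :: "complex vec \<Rightarrow> complex vec \<Rightarrow> complex" where
  "cinner v w = (\<Sum>i<dim_vec v. cnj (vec_index v i) * vec_index w i)"

definition mat_trace :: "complex mat \<Rightarrow> complex" where
  "mat_trace A = (\<Sum>i<dim_row A. A $$ (i,i))"

definition density_operator :: "nat \<Rightarrow> complex mat \<Rightarrow> bool" where
  "density_operator d A \<longleftrightarrow> A \<in> carrier_mat d d
     \<and> (\<forall>i<d. \<forall>j<d. A $$ (i,j) = cnj (A $$ (j,i)))
     \<and> (\<forall>v \<in> carrier_vec d. 0 \<le> Re (cinner v (A *\<^sub>v v)))
     \<and> mat_trace A = 1"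

text \<open>The matrix sum_k w_k |b_k><b_k| for k = 0..d-1.\<close>
definition spectral_sum :: "nat \<Rightarrow> (nat \<Rightarrow> real) \<Rightarrow> (nat \<Rightarrow> complex vec) \<Rightarrow> complex mat" where
  "spectral_sum d w b = mat d d (\<lambda>(i,j). \<Sum>k<d. complex_of_real (w k) * (b k $ i) * cnj (b k $ j))"

definition feasible :: "nat \<Rightarrow> real vec \<Rightarrow> bool" where
  "feasible d s \<longleftrightarrow> s \<in> carrier_vec d \<and> (\<Sum>i<d. s $ i) = 1 \<and> (\<Sum>i<d. (s $ i)^2) \<le> 1"

definition objective :: "nat \<Rightarrow> (nat \<Rightarrow> real) \<Rightarrow> real \<Rightarrow> real vec \<Rightarrow> real" where
  "objective d r p s = (\<Sum>i<d. r i * s $ i) + p * sqrt (1 - (\<Sum>i<d. (s $ i)^2))"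

end

theory Submission
  imports Defs "Jordan_Normal_Form.Determinant"
begin

text \<open>
  Centre everything at the uniform distribution: put \<open>t\<^sub>i = s\<^sub>i - 1/d\<close>, \<open>a\<^sub>i = r\<^sub>i - 1/d\<close> and
  \<open>y = sqrt (1 - \<Sum> s\<^sub>i\<^sup>2)\<close>. The constraints say exactly that the extended vector \<open>(t, y)\<close>
  has squared norm \<open>1 - 1/d\<close>, and the objective is \<open>1/d + \<langle>(a, p), (t, y)\<rangle>\<close>. With \<open>N = |a|\<^sup>2 + p\<^sup>2\<close>
  and \<open>c\<^sup>2 N = 1 - 1/d\<close>, expanding \<open>|(t, y) - c (a, p)|\<^sup>2 \<ge> 0\<close> bounds the inner product by \<open>c N\<close>,
  with equality only for \<open>(t, y) = c (a, p)\<close>; this point is feasible, which gives the optimum,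
  its uniqueness and its value. In the eigenbasis of \<open>\<rho>\<close> the optimal matrix is the affine
  shrinkage \<open>1/d + c (\<rho> - 1/d)\<close>, and \<open>Tr \<rho> = \<Sum> r\<^sub>i = 1\<close>, \<open>Tr \<rho>\<^sup>2 = \<Sum> r\<^sub>i\<^sup>2\<close> translate \<open>N\<close> into the
  quantities of the statement.
\<close>

lemma sum_centred_mult:
  fixes f g :: "nat \<Rightarrow> real"
  assumes "d \<ge> 1" "(\<Sum>i<d. f i) = 1" "(\<Sum>i<d. g i) = 1"
  shows "(\<Sum>i<d. (f i - 1 / real d) * (g i - 1 / real d)) = (\<Sum>i<d. f i * g i) - 1 / real d"
proof -
  have "(\<Sum>i<d. (f i - 1 / real d) * (g i - 1 / real d))
      = (\<Sum>i<d. f i * g i - 1 / real d * f i - 1 / real d * g i + 1 / (real d)\<^sup>2)"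
    by (rule sum.cong) (auto simp: power2_eq_square field_simps)
  also have "\<dots> = (\<Sum>i<d. f i * g i) - 1 / real d * (\<Sum>i<d. f i) - 1 / real d * (\<Sum>i<d. g i)
                  + real d / (real d)\<^sup>2"
    by (simp add: sum.distrib sum_subtractf sum_distrib_left)
  finally show ?thesis
    using assms by (simp add: power2_eq_square)
qed

lemma centred_sq_norm_scaled:
  fixes r :: "nat \<Rightarrow> real"
  assumes "d \<ge> 1" "(\<Sum>i<d. r i) = 1"
  shows "real d * (p\<^sup>2 + (\<Sum>i<d. (r i)\<^sup>2)) - 1 = real d * ((\<Sum>i<d. (r i - 1 / real d)\<^sup>2) + p\<^sup>2)"
  using sum_centred_mult[OF assms(1,2,2)] assms(1) by (simp add: power2_eq_square field_simps)

lemma inner_le_when_sq_norm_eq: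
  fixes a t :: "nat \<Rightarrow> real" and p y c :: real
  assumes "finite I" "c \<ge> 0"
    and sq_norm: "(\<Sum>i\<in>I. (t i)\<^sup>2) + y\<^sup>2 = c\<^sup>2 * ((\<Sum>i\<in>I. (a i)\<^sup>2) + p\<^sup>2)"
  shows "(\<Sum>i\<in>I. a i * t i) + p * y \<le> c * ((\<Sum>i\<in>I. (a i)\<^sup>2) + p\<^sup>2)"
    and "(\<Sum>i\<in>I. a i * t i) + p * y = c * ((\<Sum>i\<in>I. (a i)\<^sup>2) + p\<^sup>2)
         \<Longrightarrow> (\<forall>i\<in>I. t i = c * a i) \<and> y = c * p"
proof -
  define N where "N = (\<Sum>i\<in>I. (a i)\<^sup>2) + p\<^sup>2"
  define X where "X = (\<Sum>i\<in>I. a i * t i) + p * y"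
  define S where "S = (\<Sum>i\<in>I. (t i - c * a i)\<^sup>2) + (y - c * p)\<^sup>2"
  have "S = (\<Sum>i\<in>I. (t i)\<^sup>2 - 2 * c * (a i * t i) + c\<^sup>2 * (a i)\<^sup>2) + (y - c * p)\<^sup>2"
    unfolding S_def by (intro sum.cong arg_cong2[where f = "(+)"] refl)
      (simp add: power2_eq_square algebra_simps)
  also have "\<dots> = (\<Sum>i\<in>I. (t i)\<^sup>2) - 2 * c * (\<Sum>i\<in>I. a i * t i)
                  + c\<^sup>2 * (\<Sum>i\<in>I. (a i)\<^sup>2) + (y - c * p)\<^sup>2"
    by (simp add: sum.distrib sum_subtractf sum_distrib_left)
  also have "\<dots> = 2 * c * (c * N - X)"
    using sq_norm by (simp add: N_def X_def power2_eq_square algebra_simps)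
  finally have S_eq: "S = 2 * c * (c * N - X)" .
  have S_zero: "(\<forall>i\<in>I. t i = c * a i) \<and> y = c * p" if "S = 0"
  proof -
    have "(\<Sum>i\<in>I. (t i - c * a i)\<^sup>2) = 0" and "(y - c * p)\<^sup>2 = 0"
      using \<open>S = 0\<close> unfolding S_def by (smt (verit) sum_nonneg zero_le_power2)+
    then show ?thesis
      using \<open>finite I\<close> by (simp add: sum_nonneg_eq_0_iff)
  qed
  have S_nonneg: "S \<ge> 0"
    unfolding S_def by (intro add_nonneg_nonneg sum_nonneg) auto
  show "X \<le> c * N"
  proof (cases "c = 0")
    case True
    then have "\<forall>i\<in>I. t i = 0" "y = 0"
      using S_zero S_eq by auto
    then show ?thesis
      using True by (simp add: X_def)
  next
    case False
    then show ?thesis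
      using S_nonneg S_eq \<open>c \<ge> 0\<close> by (simp add: zero_le_mult_iff)
  qed
  show "(\<forall>i\<in>I. t i = c * a i) \<and> y = c * p" if "X = c * N"
    using S_zero S_eq that by simp
qed

lemma shrinkage_factor_sq:
  assumes "d \<ge> 1" "N > 0"
  shows "(sqrt ((real d - 1) / (real d * N)))\<^sup>2 * N = 1 - 1 / real d"
  using assms by (simp add: field_simps)

lemma shrinkage_value:
  assumes "d \<ge> 1" "N > 0"
  shows "1 / real d + sqrt ((real d - 1) / (real d * N)) * N
         = (1 + sqrt (real d - 1) * sqrt (real d * N)) / real d"
proof -
  have dN: "real d * N > 0"
    using assms by simp
  have "sqrt ((real d - 1) / (real d * N)) * N = sqrt (real d - 1) * N / sqrt (real d * N)"
    by (simp add: real_sqrt_divide)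
  also have "\<dots> = sqrt (real d - 1) * sqrt (real d * N) / real d"
    using dN assms by (simp add: field_simps real_sqrt_mult)
  finally show ?thesis
    using assms by (simp add: add_divide_distrib)
qed

lemma objective_centred:
  fixes r :: "nat \<Rightarrow> real" and s :: "real vec"
  assumes "d \<ge> 1" "(\<Sum>i<d. r i) = 1" "(\<Sum>i<d. s $ i) = 1"
  shows "objective d r p s = 1 / real d + (\<Sum>i<d. (r i - 1 / real d) * (s $ i - 1 / real d))
                             + p * sqrt (1 - (\<Sum>i<d. (s $ i)\<^sup>2))"
  using sum_centred_mult[of d r "\<lambda>i. s $ i"] assms by (simp add: objective_def)

lemma feasible_centred_sq_norm:
  assumes "d \<ge> 1" "feasible d s"
  shows "(\<Sum>i<d. (s $ i - 1 / real d)\<^sup>2) + (sqrt (1 - (\<Sum>i<d. (s $ i)\<^sup>2)))\<^sup>2 = 1 - 1 / real d"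
  using sum_centred_mult[of d "\<lambda>i. s $ i" "\<lambda>i. s $ i"] assms
  by (simp add: feasible_def power2_eq_square)

lemma objective_le_shrinkage:
  fixes r :: "nat \<Rightarrow> real" and s :: "real vec"
  assumes "d \<ge> 1" "(\<Sum>i<d. r i) = 1" "p > 0" "feasible d s"
  defines "N \<equiv> (\<Sum>i<d. (r i - 1 / real d)\<^sup>2) + p\<^sup>2"
  defines "c \<equiv> sqrt ((real d - 1) / (real d * N))"
  shows "objective d r p s \<le> 1 / real d + c * N"
    and "objective d r p s = 1 / real d + c * N
         \<Longrightarrow> s = vec d (\<lambda>i. 1 / real d + c * (r i - 1 / real d))"
proof -
  define y where "y = sqrt (1 - (\<Sum>i<d. (s $ i)\<^sup>2))"
  have "N > 0"
    unfolding N_def using \<open>p > 0\<close> by (simp add: add_nonneg_pos sum_nonneg)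
  then have "c \<ge> 0"
    using \<open>d \<ge> 1\<close> by (simp add: c_def)
  have "(\<Sum>i<d. (s $ i - 1 / real d)\<^sup>2) + y\<^sup>2 = c\<^sup>2 * N"
    using feasible_centred_sq_norm shrinkage_factor_sq assms \<open>N > 0\<close>
    unfolding c_def y_def by (simp add: mult.commute)
  note inner = inner_le_when_sq_norm_eq[OF finite_lessThan \<open>c \<ge> 0\<close> this[unfolded N_def],
      folded N_def]
  have obj: "objective d r p s = 1 / real d + ((\<Sum>i<d. (r i - 1 / real d) * (s $ i - 1 / real d)) + p * y)"
    using objective_centred assms unfolding y_def feasible_def by simp
  show "objective d r p s \<le> 1 / real d + c * N"
    using inner(1) obj by simp
  show "s = vec d (\<lambda>i. 1 / real d + c * (r i - 1 / real d))"
    if "objective d r p s = 1 / real d + c * N"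
    using inner(2) obj that \<open>feasible d s\<close>
    by (intro eq_vecI) (auto simp: feasible_def algebra_simps)
qed

lemma shrinkage_feasible_objective:
  fixes r :: "nat \<Rightarrow> real"
  assumes "d \<ge> 1" "(\<Sum>i<d. r i) = 1" "p > 0"
  defines "N \<equiv> (\<Sum>i<d. (r i - 1 / real d)\<^sup>2) + p\<^sup>2"
  defines "c \<equiv> sqrt ((real d - 1) / (real d * N))"
  defines "s\<^sub>0 \<equiv> vec d (\<lambda>i. 1 / real d + c * (r i - 1 / real d))"
  shows "feasible d s\<^sub>0" and "objective d r p s\<^sub>0 = 1 / real d + c * N"
proof -
  have "N > 0"
    unfolding N_def using \<open>p > 0\<close> by (simp add: add_nonneg_pos sum_nonneg)
  have "c \<ge> 0"
    using \<open>N > 0\<close> \<open>d \<ge> 1\<close> by (simp add: c_def)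
  have centred: "s\<^sub>0 $ i - 1 / real d = c * (r i - 1 / real d)" if "i < d" for i
    using that by (simp add: s\<^sub>0_def)
  have "(\<Sum>i<d. s\<^sub>0 $ i) = (\<Sum>i<d. 1 / real d + c * r i - c / real d)"
    by (intro sum.cong) (auto simp: s\<^sub>0_def algebra_simps)
  also have "\<dots> = 1"
    using \<open>d \<ge> 1\<close> \<open>(\<Sum>i<d. r i) = 1\<close> by (simp add: sum.distrib sum_subtractf flip: sum_distrib_left)
  finally have sum_s\<^sub>0: "(\<Sum>i<d. s\<^sub>0 $ i) = 1" .
  have "(\<Sum>i<d. (s\<^sub>0 $ i)\<^sup>2) - 1 / real d = (\<Sum>i<d. (s\<^sub>0 $ i - 1 / real d)\<^sup>2)"
    using sum_centred_mult[of d "\<lambda>i. s\<^sub>0 $ i" "\<lambda>i. s\<^sub>0 $ i"] sum_s\<^sub>0 \<open>d \<ge> 1\<close>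
    by (simp add: power2_eq_square)
  also have "\<dots> = c\<^sup>2 * (\<Sum>i<d. (r i - 1 / real d)\<^sup>2)"
    by (simp add: centred power_mult_distrib sum_distrib_left)
  finally have "1 - (\<Sum>i<d. (s\<^sub>0 $ i)\<^sup>2) = (c * p)\<^sup>2"
    using shrinkage_factor_sq[OF \<open>d \<ge> 1\<close> \<open>N > 0\<close>]
    by (simp add: N_def c_def power_mult_distrib algebra_simps)
  then have slack: "sqrt (1 - (\<Sum>i<d. (s\<^sub>0 $ i)\<^sup>2)) = c * p" and "(\<Sum>i<d. (s\<^sub>0 $ i)\<^sup>2) \<le> 1"
    using \<open>c \<ge> 0\<close> \<open>p > 0\<close> by (simp, smt (verit) zero_le_power2)
  then show "feasible d s\<^sub>0"
    using sum_s\<^sub>0 by (simp add: feasible_def s\<^sub>0_def)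
  have "(\<Sum>i<d. (r i - 1 / real d) * (s\<^sub>0 $ i - 1 / real d)) = c * (\<Sum>i<d. (r i - 1 / real d)\<^sup>2)"
    by (simp add: centred sum_distrib_left power2_eq_square algebra_simps)
  then show "objective d r p s\<^sub>0 = 1 / real d + c * N"
    using objective_centred[OF assms(1,2) sum_s\<^sub>0] slack
    by (simp add: N_def power2_eq_square algebra_simps)
qed

definition orthonormal_basis :: "nat \<Rightarrow> (nat \<Rightarrow> complex vec) \<Rightarrow> bool" where
  "orthonormal_basis d b \<longleftrightarrow> (\<forall>k<d. b k \<in> carrier_vec d)
     \<and> (\<forall>k<d. \<forall>l<d. cinner (b k) (b l) = (if k = l then 1 else 0))"

lemma orthonormal_basis_cinner:
  assumes "orthonormal_basis d b" "k < d" "l < d"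
  shows "(\<Sum>i<d. cnj (b k $ i) * b l $ i) = (if k = l then 1 else 0)"
proof -
  have "dim_vec (b k) = d"
    using assms by (auto simp: orthonormal_basis_def)
  moreover have "cinner (b k) (b l) = (if k = l then 1 else 0)"
    using assms by (simp add: orthonormal_basis_def)
  ultimately show ?thesis
    by (simp add: cinner_def)
qed

lemma orthonormal_basis_resolution_of_identity:
  assumes "orthonormal_basis d b" "i < d" "j < d"
  shows "(\<Sum>k<d. b k $ i * cnj (b k $ j)) = (if i = j then 1 else 0)"
proof -
  define B where "B = mat d d (\<lambda>(i, k). b k $ i)"
  define B' where "B' = mat d d (\<lambda>(k, i). cnj (b k $ i))"
  have "B' * B = 1\<^sub>m d"
  proof (rule eq_matI)
    fix k l assume "k < dim_row (1\<^sub>m d :: complex mat)" "l < dim_col (1\<^sub>m d :: complex mat)"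
    then have "k < d" "l < d" by auto
    then have "(B' * B) $$ (k, l) = (\<Sum>i<d. cnj (b k $ i) * b l $ i)"
      by (simp add: B'_def B_def scalar_prod_def lessThan_atLeast0)
    then show "(B' * B) $$ (k, l) = 1\<^sub>m d $$ (k, l)"
      using orthonormal_basis_cinner[OF assms(1) \<open>k < d\<close> \<open>l < d\<close>] \<open>k < d\<close> \<open>l < d\<close> by simp
  qed (auto simp: B'_def B_def)
  \<comment> \<open>a square matrix with orthonormal columns also has orthonormal rows\<close>
  then have "B * B' = 1\<^sub>m d"
    by (rule mat_mult_left_right_inverse[rotated 2]) (auto simp: B_def B'_def)
  then have "(B * B') $$ (i, j) = (if i = j then 1 else 0)"
    using assms by simp
  then show ?thesis
    using assms by (simp add: B'_def B_def scalar_prod_def lessThan_atLeast0)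
qed

lemma mat_trace_spectral_sum:
  assumes "orthonormal_basis d b"
  shows "mat_trace (spectral_sum d w b) = complex_of_real (\<Sum>k<d. w k)"
proof -
  have "mat_trace (spectral_sum d w b)
      = (\<Sum>i<d. \<Sum>k<d. complex_of_real (w k) * b k $ i * cnj (b k $ i))"
    by (simp add: mat_trace_def spectral_sum_def)
  also have "\<dots> = (\<Sum>k<d. \<Sum>i<d. complex_of_real (w k) * b k $ i * cnj (b k $ i))"
    by (rule sum.swap)
  also have "\<dots> = (\<Sum>k<d. complex_of_real (w k) * (\<Sum>i<d. cnj (b k $ i) * b k $ i))"
    by (simp add: sum_distrib_left algebra_simps)
  also have "\<dots> = (\<Sum>k<d. complex_of_real (w k))"
    using orthonormal_basis_cinner[OF assms] by simp
  finally show ?thesis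
    by simp
qed

lemma spectral_sum_mult:
  assumes "orthonormal_basis d b"
  shows "spectral_sum d v b * spectral_sum d w b = spectral_sum d (\<lambda>k. v k * w k) b"
proof (rule eq_matI)
  fix i j assume "i < dim_row (spectral_sum d (\<lambda>k. v k * w k) b)"
    "j < dim_col (spectral_sum d (\<lambda>k. v k * w k) b)"
  then have "i < d" "j < d"
    by (auto simp: spectral_sum_def)
  let ?v = "\<lambda>k. complex_of_real (v k)" and ?w = "\<lambda>k. complex_of_real (w k)"
  have "(spectral_sum d v b * spectral_sum d w b) $$ (i, j)
      = (\<Sum>m<d. (\<Sum>k<d. ?v k * b k $ i * cnj (b k $ m)) * (\<Sum>l<d. ?w l * b l $ m * cnj (b l $ j)))"
    using \<open>i < d\<close> \<open>j < d\<close> by (simp add: spectral_sum_def scalar_prod_def lessThan_atLeast0)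
  also have "\<dots> = (\<Sum>m<d. \<Sum>k<d. \<Sum>l<d.
      ?v k * b k $ i * cnj (b k $ m) * (?w l * b l $ m * cnj (b l $ j)))"
    by (simp add: sum_product)
  also have "\<dots> = (\<Sum>k<d. \<Sum>m<d. \<Sum>l<d.
      ?v k * b k $ i * cnj (b k $ m) * (?w l * b l $ m * cnj (b l $ j)))"
    by (rule sum.swap)
  also have "\<dots> = (\<Sum>k<d. \<Sum>l<d. \<Sum>m<d.
      ?v k * b k $ i * cnj (b k $ m) * (?w l * b l $ m * cnj (b l $ j)))"
    by (rule sum.cong[OF refl], rule sum.swap)
  also have "\<dots> = (\<Sum>k<d. \<Sum>l<d.
      ?v k * ?w l * b k $ i * cnj (b l $ j) * (\<Sum>m<d. cnj (b k $ m) * b l $ m))"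
    by (simp add: sum_distrib_left algebra_simps)
  also have "\<dots> = (\<Sum>k<d. ?v k * ?w k * b k $ i * cnj (b k $ j))"
    by (simp add: orthonormal_basis_cinner[OF assms] if_distrib cong: if_cong)
  also have "\<dots> = spectral_sum d (\<lambda>k. v k * w k) b $$ (i, j)"
    using \<open>i < d\<close> \<open>j < d\<close> by (simp add: spectral_sum_def)
  finally show "(spectral_sum d v b * spectral_sum d w b) $$ (i, j)
      = spectral_sum d (\<lambda>k. v k * w k) b $$ (i, j)" .
qed (auto simp: spectral_sum_def)

lemma spectral_sum_shrink:
  assumes "orthonormal_basis d b" and v: "\<And>k. k < d \<Longrightarrow> v k = u + c * (w k - u)"
  shows "spectral_sum d v b = complex_of_real u \<cdot>\<^sub>m 1\<^sub>m d
           + complex_of_real c \<cdot>\<^sub>m (spectral_sum d w b - complex_of_real u \<cdot>\<^sub>m 1\<^sub>m d)"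
    (is "_ = ?rhs")
proof (rule eq_matI)
  fix i j assume "i < dim_row ?rhs" "j < dim_col ?rhs"
  then have "i < d" "j < d"
    by auto
  let ?u = "complex_of_real u" and ?c = "complex_of_real c"
  have v_complex: "complex_of_real (v k) = ?u * (1 - ?c) + ?c * complex_of_real (w k)"
    if "k < d" for k
  proof -
    have "v k = u * (1 - c) + c * w k"
      using v[OF that] by (simp add: algebra_simps)
    then show ?thesis
      by simp
  qed
  define \<delta> where "\<delta> = (\<Sum>k<d. b k $ i * cnj (b k $ j))"
  have "spectral_sum d v b $$ (i, j)
      = (\<Sum>k<d. ?u * (1 - ?c) * (b k $ i * cnj (b k $ j))
                + ?c * (complex_of_real (w k) * b k $ i * cnj (b k $ j)))"
    using \<open>i < d\<close> \<open>j < d\<close> unfolding spectral_sum_def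
    by (simp, intro sum.cong) (simp_all add: v_complex algebra_simps)
  also have "\<dots> = ?u * (1 - ?c) * \<delta> + ?c * spectral_sum d w b $$ (i, j)"
    using \<open>i < d\<close> \<open>j < d\<close> by (simp add: \<delta>_def spectral_sum_def sum.distrib sum_distrib_left)
  also have "\<dots> = ?rhs $$ (i, j)"
    using \<open>i < d\<close> \<open>j < d\<close> orthonormal_basis_resolution_of_identity[OF assms(1) \<open>i < d\<close> \<open>j < d\<close>]
    by (simp add: \<delta>_def spectral_sum_def algebra_simps)
  finally show "spectral_sum d v b $$ (i, j) = ?rhs $$ (i, j)" .
qed (auto simp: spectral_sum_def)

lemma re_mat_trace_spectral_sum_square:
  assumes "orthonormal_basis d b"
  shows "Re (mat_trace (spectral_sum d w b * spectral_sum d w b)) = (\<Sum>k<d. (w k)\<^sup>2)"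
  by (simp add: spectral_sum_mult[OF assms] mat_trace_spectral_sum[OF assms] power2_eq_square)

theorem lemma2:
  fixes d :: nat and \<rho> :: "complex mat" and r :: "nat \<Rightarrow> real"
    and b :: "nat \<Rightarrow> complex vec" and p :: real
  assumes "d \<ge> 1"
    and "density_operator d \<rho>"
    and "\<forall>k<d. b k \<in> carrier_vec d"
    and "\<forall>k<d. \<forall>l<d. cinner (b k) (b l) = (if k = l then 1 else 0)"
    and "\<rho> = spectral_sum d r b"
    and "p > 0"
  shows
    "let T = Re (mat_trace (\<rho> * \<rho>));
         c = sqrt ((real d - 1) / (real d * (p\<^sup>2 + T) - 1));
         s0 = vec d (\<lambda>i. 1 / real d + c * (r i - 1 / real d))
     in feasible d s0
        \<and> (\<forall>s. feasible d s \<longrightarrow> objective d r p s \<le> objective d r p s0)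
        \<and> (\<forall>s. feasible d s \<and> objective d r p s = objective d r p s0 \<longrightarrow> s = s0)
        \<and> objective d r p s0
            = (1 + sqrt (real d - 1) * sqrt (real d * (p\<^sup>2 + T) - 1)) / real d
        \<and> spectral_sum d (\<lambda>i. s0 $ i) b
            = (1 / complex_of_real (real d)) \<cdot>\<^sub>m 1\<^sub>m d
              + complex_of_real c \<cdot>\<^sub>m (\<rho> - (1 / complex_of_real (real d)) \<cdot>\<^sub>m 1\<^sub>m d)"
proof -
  have basis: "orthonormal_basis d b"
    using assms(3,4) by (simp add: orthonormal_basis_def)
  have "complex_of_real (\<Sum>k<d. r k) = 1"
    using assms(2,5) mat_trace_spectral_sum[OF basis] by (simp add: density_operator_def)
  then have sum_r: "(\<Sum>k<d. r k) = 1"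
    by (simp only: of_real_eq_1_iff)
  have denominator: "real d * (p\<^sup>2 + Re (mat_trace (\<rho> * \<rho>))) - 1
      = real d * ((\<Sum>k<d. (r k - 1 / real d)\<^sup>2) + p\<^sup>2)"
    using centred_sq_norm_scaled[OF assms(1) sum_r] re_mat_trace_spectral_sum_square[OF basis]
      assms(5) by simp
  define N where "N = (\<Sum>k<d. (r k - 1 / real d)\<^sup>2) + p\<^sup>2"
  define c where "c = sqrt ((real d - 1) / (real d * N))"
  define s\<^sub>0 where "s\<^sub>0 = vec d (\<lambda>i. 1 / real d + c * (r i - 1 / real d))"
  have "N > 0"
    unfolding N_def using assms(6) by (simp add: add_nonneg_pos sum_nonneg)
  have "feasible d s\<^sub>0" and s\<^sub>0_objective: "objective d r p s\<^sub>0 = 1 / real d + c * N"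
    unfolding s\<^sub>0_def c_def N_def by (fact shrinkage_feasible_objective[OF assms(1) sum_r assms(6)])+
  moreover have "objective d r p s \<le> objective d r p s\<^sub>0"
    and "objective d r p s = objective d r p s\<^sub>0 \<Longrightarrow> s = s\<^sub>0" if "feasible d s" for s
    unfolding s\<^sub>0_objective unfolding s\<^sub>0_def c_def N_def
    by (fact objective_le_shrinkage[OF assms(1) sum_r assms(6) that])+
  moreover have "objective d r p s\<^sub>0 = (1 + sqrt (real d - 1) * sqrt (real d * N)) / real d"
    unfolding s\<^sub>0_objective c_def by (rule shrinkage_value[OF assms(1) \<open>N > 0\<close>])
  moreover have "spectral_sum d (\<lambda>i. s\<^sub>0 $ i) b = 1 / complex_of_real (real d) \<cdot>\<^sub>m 1\<^sub>m d
      + complex_of_real c \<cdot>\<^sub>m (\<rho> - 1 / complex_of_real (real d) \<cdot>\<^sub>m 1\<^sub>m d)"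
    using spectral_sum_shrink[OF basis, of "\<lambda>i. s\<^sub>0 $ i" "1 / real d" c r] assms(5)
    by (simp add: s\<^sub>0_def)
  ultimately show ?thesis
    unfolding Let_def denominator N_def[symmetric] c_def[symmetric] s\<^sub>0_def[symmetric]
    by blast
qed

end
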